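(* For each $t\in\{0,1,\dots,T\}$ and $i\in\{1,\dots,N\}$, the function $(x,k)\mapsto\tilde V^{N,i}_t(x,k)$ on $\mathbb{N}_0^2$ is (i) non-decreasing in $x$ for each fixed $k$, and (ii) non-decreasing in $k$ for each fixed $x$.
   Context: Fix integers $N\ge1$, $T\ge1$, reals $\alpha_0,\beta_0>0$, and for each $i\in\{1,\dots,N\}$ an integer failure threshold $\xi_i\ge1$ and costs $0<c_p^i<c_u^i$. $\mathbb{N}_0=\{0,1,2,\dots\}$. For real $r>0$ and $p\in(0,1)$, $NB(r,p)$ is the distribution on $\mathbb{N}_0$ with $P(n)=\frac{\Gamma(n+r)}{\Gamma(r)n!}p^r(1-p)^n$; $NB(0,p)$ is the point mass at $0$. For $t\in\{0,\dots,T\}$ let $p_t=\frac{\beta_0+Nt}{\beta_0+Nt+1}$. Let $\mathbb{I}_i(x)=1$ if $x\ge\xi_i$, else $0$; $\mathcal{A}_i(x)=\{0,1\}$ if $x<\xi_i$ and $\{1\}$ if $x\ge\xi_i$ ($a=1$: replacement); $C_i(x,a)=a(1-\mathbb{I}_i(x))c_p^i+\mathbb{I}_i(x)c_u^i$. Define $\tilde V^{N,i}_T(x,k)=\mathbb{I}_i(x)c_u^i$ and for $t=T-1,\dots,0$: $\tilde V^{N,i}_t(x,k)=\min_{a\in\mathcal{A}_i(x)}\{C_i(x,a)+\mathbb{E}[\tilde V^{N,i}_{t+1}(x(1-a)+Z,\;k+Z+K)]\}$, where $Z\sim NB(\alpha_0+k,p_t)$ and $K\sim NB((N-1)(\alpha_0+k),p_t)$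 are independent. *)

theory Defs
  imports "HOL-Analysis.Analysis"
begin

definition nb_pmf :: "real \<Rightarrow> real \<Rightarrow> nat \<Rightarrow> real" where
  "nb_pmf r p n = (if r = 0 then (if n = 0 then 1 else 0)
     else Gamma (real n + r) / (Gamma r * fact n) * p powr r * (1 - p) ^ n)"

definition p_t :: "nat \<Rightarrow> real \<Rightarrow> nat \<Rightarrow> real" where
  "p_t N \<beta>0 t = (\<beta>0 + real N * real t) / (\<beta>0 + real N * real t + 1)"

definition ind :: "nat \<Rightarrow> nat \<Rightarrow> real" where
  "ind \<xi> x = (if x \<ge> \<xi> then 1 else 0)"

definition acts :: "nat \<Rightarrow> nat \<Rightarrow> nat set" where
  "acts \<xi> x = (if x < \<xi> then {0, 1} else {1})"

definition cost :: "nat \<Rightarrow> real \<Rightarrow> real \<Rightarrow> nat \<Rightarrow> nat \<Rightarrow> real" where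
  "cost \<xi> cp cu x a = real a * (1 - ind \<xi> x) * cp + ind \<xi> x * cu"

text \<open>Value function indexed by the number m of remaining steps; stage t = T - m.\<close>
fun Vrem :: "nat \<Rightarrow> nat \<Rightarrow> real \<Rightarrow> real \<Rightarrow> nat \<Rightarrow> real \<Rightarrow> real \<Rightarrow> nat \<Rightarrow> nat \<Rightarrow> nat \<Rightarrow> real" where
  "Vrem N T \<alpha>0 \<beta>0 \<xi> cp cu 0 x k = ind \<xi> x * cu"
| "Vrem N T \<alpha>0 \<beta>0 \<xi> cp cu (Suc m) x k =
     (let t = T - Suc m; p = p_t N \<beta>0 t; r = \<alpha>0 + real k in
      Min ((\<lambda>a. cost \<xi> cp cu x a +
              (\<Sum>\<^sub>\<infinity>(z, j)\<in>UNIV. nb_pmf r p z * nb_pmf ((real N - 1) * r) p j *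
                  Vrem N T \<alpha>0 \<beta>0 \<xi> cp cu m (x * (1 - a) + z) (k + z + j))) ` acts \<xi> x))"

definition Vtil :: "nat \<Rightarrow> nat \<Rightarrow> real \<Rightarrow> real \<Rightarrow> nat \<Rightarrow> real \<Rightarrow> real \<Rightarrow> nat \<Rightarrow> nat \<Rightarrow> nat \<Rightarrow> real" where
  "Vtil N T \<alpha>0 \<beta>0 \<xi> cp cu t x k = Vrem N T \<alpha>0 \<beta>0 \<xi> cp cu (T - t) x k"

end

theory Submission
  imports Defs
begin

text \<open>
  If the next-stage value is bounded,
  non-decreasing in the degradation level \<open>x\<close> and in the count \<open>k\<close>, then so is its expectation
  under the transition: monotonicity in \<open>x\<close> passes through the expectation pointwise, and a
  larger \<open>k\<close> both raises the integrand and enlarges the shape parameters of the two negative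
  binomial laws, which increases them stochastically. Taking the minimum over the two actions,
  and paying \<open>cu > cp\<close> once the threshold is reached, preserves both monotonicities.
\<close>

lemma nb_pmf_Suc:
  assumes "r \<ge> 0"
  shows "nb_pmf r p (Suc n) = nb_pmf r p n * ((real n + r) / (real n + 1)) * (1 - p)"
proof (cases "r = 0")
  case True
  then show ?thesis by (simp add: nb_pmf_def)
next
  case False
  then have r: "r > 0" using assms by simp
  have "real n + r \<notin> \<int>\<^sub>\<le>\<^sub>0" using r by auto
  then have "Gamma (real (Suc n) + r) = (real n + r) * Gamma (real n + r)"
    using Gamma_plus1[of "real n + r"] by (simp add: add_ac)
  then show ?thesis using r by (simp add: nb_pmf_def field_simps)
qed

lemma nb_pmf_eq_gbinomial:
  assumes "r > 0"
  shows "nb_pmf r p n = ((- r) gchoose n) * (p - 1) ^ n * p powr r"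
proof -
  have "r \<notin> \<int>\<^sub>\<le>\<^sub>0" using assms by auto
  then have "pochhammer r n = Gamma (r + real n) / Gamma r"
    using pochhammer_Gamma[of r n] by simp
  moreover have "(- r) gchoose n = (- 1) ^ n * pochhammer r n / fact n"
    by (simp add: gbinomial_pochhammer)
  moreover have "(p - 1) ^ n = (- 1) ^ n * (1 - p) ^ n"
    by (metis minus_diff_eq mult_minus1 power_mult_distrib)
  moreover have "((- 1 :: real) ^ n) * (- 1) ^ n = 1"
    by (metis power_mult_distrib mult_minus1 minus_minus power_one)
  ultimately show ?thesis using assms
    by (simp add: nb_pmf_def field_simps add.commute)
qed

definition nb_expect :: "real \<Rightarrow> real \<Rightarrow> (nat \<Rightarrow> real) \<Rightarrow> real" where
  "nb_expect r p f = (\<Sum>\<^sub>\<infinity>n\<in>UNIV. nb_pmf r p n * f n)"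

context
  fixes p :: real
  assumes p_pos: "0 < p" and p_less_1: "p < 1"
begin

lemma nb_pmf_nonneg: "r \<ge> 0 \<Longrightarrow> 0 \<le> nb_pmf r p n"
  using p_pos p_less_1 unfolding nb_pmf_def
  by (auto intro!: mult_nonneg_nonneg divide_nonneg_nonneg less_imp_le[OF Gamma_real_pos])

lemma nb_pmf_sums_1:
  assumes "r \<ge> 0"
  shows "nb_pmf r p sums 1"
proof (cases "r = 0")
  case True
  then have "nb_pmf r p = (\<lambda>n. if n = 0 then (\<lambda>_. 1 :: real) n else 0)"
    by (auto simp: nb_pmf_def)
  then show ?thesis using sums_single[of 0 "\<lambda>_. 1 :: real"] by simp
next
  case False
  then have r: "r > 0" using assms by simp
  have "\<bar>p - 1\<bar> < 1" using p_pos p_less_1 by simp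
  from gen_binomial_real[OF this, of "- r"]
  have "(\<lambda>n. ((- r) gchoose n) * (p - 1) ^ n * p powr r) sums (p powr (- r) * p powr r)"
    by (intro sums_mult2) simp
  moreover have "p powr (- r) * p powr r = 1"
    using p_pos by (simp add: powr_minus field_simps)
  moreover have "nb_pmf r p = (\<lambda>n. ((- r) gchoose n) * (p - 1) ^ n * p powr r)"
    using nb_pmf_eq_gbinomial[OF r] by blast
  ultimately show ?thesis by simp
qed

lemma nb_pmf_has_sum_1: "r \<ge> 0 \<Longrightarrow> (nb_pmf r p has_sum 1) UNIV"
  by (rule sums_nonneg_imp_has_sum[OF nb_pmf_sums_1 nb_pmf_nonneg])

lemma nb_pmf_has_sum_const: "r \<ge> 0 \<Longrightarrow> ((\<lambda>n. nb_pmf r p n * c) has_sum c) UNIV"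
  using has_sum_cmult_left[OF nb_pmf_has_sum_1, of r c] by simp

lemma nb_expect_has_sum:
  assumes r: "r \<ge> 0" and f: "\<And>n. 0 \<le> f n" "\<And>n. f n \<le> B"
  shows "((\<lambda>n. nb_pmf r p n * f n) has_sum nb_expect r p f) UNIV"
proof -
  have "(\<lambda>n. nb_pmf r p n * f n) summable_on UNIV"
  proof (rule summable_on_comparison_test)
    show "(\<lambda>n. nb_pmf r p n * B) summable_on UNIV"
      using nb_pmf_has_sum_const[OF r] by (auto simp: summable_on_def)
    show "nb_pmf r p n * f n \<le> nb_pmf r p n * B" for n
      by (rule mult_left_mono[OF f(2) nb_pmf_nonneg[OF r]])
  qed (use f(1) nb_pmf_nonneg[OF r] in simp)
  then show ?thesis unfolding nb_expect_def by simp
qed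

lemma nb_expect_nonneg: "r \<ge> 0 \<Longrightarrow> (\<And>n. 0 \<le> f n) \<Longrightarrow> 0 \<le> nb_expect r p f"
  unfolding nb_expect_def by (intro infsum_nonneg) (simp add: nb_pmf_nonneg)

lemma nb_expect_le_bound:
  assumes r: "r \<ge> 0" and f: "\<And>n. 0 \<le> f n" "\<And>n. f n \<le> B"
  shows "nb_expect r p f \<le> B"
  by (rule has_sum_mono[OF nb_expect_has_sum[OF assms] nb_pmf_has_sum_const[OF r, of B]])
    (rule mult_left_mono[OF f(2) nb_pmf_nonneg[OF r]])

lemma nb_expect_mono:
  assumes r: "r \<ge> 0" and f: "\<And>n. 0 \<le> f n" "\<And>n. f n \<le> B"
    and g: "\<And>n. 0 \<le> g n" "\<And>n. g n \<le> B" and fg: "\<And>n. f n \<le> g n"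
  shows "nb_expect r p f \<le> nb_expect r p g"
  by (rule has_sum_mono[OF nb_expect_has_sum[OF r f] nb_expect_has_sum[OF r g]])
    (rule mult_left_mono[OF fg nb_pmf_nonneg[OF r]])

text \<open>The likelihood ratio \<open>nb_pmf r' p n / nb_pmf r p n\<close> is non-decreasing in \<open>n\<close> by the
  recurrence \<open>nb_pmf_Suc\<close>, and both pmfs have mass \<open>1\<close>, so they cross exactly once.\<close>

lemma nb_pmf_single_crossing:
  assumes r: "r \<ge> 0" and rr': "r \<le> r'"
  obtains n0 where "\<And>n. n0 \<le> n \<Longrightarrow> nb_pmf r p n \<le> nb_pmf r' p n"
    and "\<And>n. n < n0 \<Longrightarrow> nb_pmf r' p n \<le> nb_pmf r p n"
proof -
  have r': "r' \<ge> 0" using r rr' by simp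
  define S where "S = {n. nb_pmf r p n \<le> nb_pmf r' p n}"
  have Suc_in_S: "Suc n \<in> S" if "n \<in> S" for n
  proof -
    have "nb_pmf r p n * ((real n + r) / (real n + 1)) * (1 - p)
        \<le> nb_pmf r' p n * ((real n + r') / (real n + 1)) * (1 - p)"
      using that p_less_1 r rr' nb_pmf_nonneg[OF r, of n]
      by (intro mult_right_mono mult_mono divide_right_mono) (auto simp: S_def)
    then show ?thesis by (simp add: S_def nb_pmf_Suc[OF r] nb_pmf_Suc[OF r'])
  qed
  have "S \<noteq> {}"
  proof
    assume "S = {}"
    then have "nb_pmf r' p n < nb_pmf r p n" for n by (auto simp: S_def not_le)
    then have "(1 :: real) < 1"
      by (intro has_sum_strict_mono[OF nb_pmf_has_sum_1[OF r'] nb_pmf_has_sum_1[OF r], of 0])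
        (auto intro: less_imp_le)
    then show False by simp
  qed
  define n0 where "n0 = (LEAST n. n \<in> S)"
  have "n0 \<in> S" unfolding n0_def using \<open>S \<noteq> {}\<close> by (metis LeastI ex_in_conv)
  have "n \<in> S" if "n0 \<le> n" for n
    using that by (induction n rule: dec_induct) (auto intro: \<open>n0 \<in> S\<close> Suc_in_S)
  moreover have "n \<notin> S" if "n < n0" for n
    using that not_less_Least n0_def by blast
  ultimately show ?thesis by (intro that[of n0]) (auto simp: S_def not_le intro: less_imp_le)
qed

lemma nb_expect_mono_shape:
  assumes r: "r \<ge> 0" and rr': "r \<le> r'" and f: "\<And>n. 0 \<le> f n" "\<And>n. f n \<le> B"
    and f_mono: "\<And>n m. n \<le> m \<Longrightarrow> f n \<le> f m"
  shows "nb_expect r p f \<le> nb_expect r' p f"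
proof -
  have r': "r' \<ge> 0" using r rr' by simp
  obtain n0 where above: "\<And>n. n0 \<le> n \<Longrightarrow> nb_pmf r p n \<le> nb_pmf r' p n"
    and below: "\<And>n. n < n0 \<Longrightarrow> nb_pmf r' p n \<le> nb_pmf r p n"
    using nb_pmf_single_crossing[OF r rr'] by blast
  define C where "C = f n0"
  have "0 \<le> (nb_pmf r' p n - nb_pmf r p n) * (f n - C)" for n
  proof (cases "n0 \<le> n")
    case True
    then show ?thesis using above f_mono by (simp add: C_def)
  next
    case False
    then show ?thesis using below f_mono[of n n0] by (simp add: C_def mult_nonpos_nonpos)
  qed
  then have "nb_pmf r p n * f n + nb_pmf r' p n * C \<le> nb_pmf r' p n * f n + nb_pmf r p n * C" for n
    by (simp add: algebra_simps)
  then have "nb_expect r p f + C \<le> nb_expect r' p f + C"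
    by (rule has_sum_mono[OF has_sum_add[OF nb_expect_has_sum[OF r f] nb_pmf_has_sum_const[OF r']]
          has_sum_add[OF nb_expect_has_sum[OF r' f] nb_pmf_has_sum_const[OF r]]])
  then show ?thesis by simp
qed

lemma infsum_nb_pmf_product_eq_nb_expect_iterated:
  assumes r: "r \<ge> 0" and s: "s \<ge> 0" and g: "\<And>z j. 0 \<le> g z j" "\<And>z j. g z j \<le> B"
  shows "(\<Sum>\<^sub>\<infinity>(z, j)\<in>UNIV. nb_pmf r p z * nb_pmf s p j * g z j)
    = nb_expect r p (\<lambda>z. nb_expect s p (g z))"
proof -
  define F where "F = (\<lambda>(z, j). nb_pmf r p z * nb_pmf s p j * g z j)"
  define G where "G = (\<lambda>(z :: nat, j :: nat). nb_pmf r p z * (nb_pmf s p j * B))"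
  have B: "0 \<le> B" using g(1)[of 0 0] g(2)[of 0 0] by linarith
  have "G summable_on Sigma UNIV (\<lambda>_. UNIV)"
  proof (rule summable_on_SigmaI)
    show "((\<lambda>j. G (z, j)) has_sum nb_pmf r p z * B) UNIV" for z
      unfolding G_def using has_sum_cmult_right[OF nb_pmf_has_sum_const[OF s, of B]] by simp
    show "(\<lambda>z. nb_pmf r p z * B) summable_on UNIV"
      using nb_pmf_has_sum_const[OF r, of B] by (auto simp: summable_on_def)
    show "0 \<le> G (z, j)" for z j
      unfolding G_def using nb_pmf_nonneg[OF r] nb_pmf_nonneg[OF s] B by simp
  qed
  then have F_summable: "F summable_on Sigma UNIV (\<lambda>_. UNIV)"
  proof (rule summable_on_comparison_test)
    fix zj :: "nat \<times> nat"
    obtain z j where zj: "zj = (z, j)" by fastforce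
    have "0 \<le> nb_pmf r p z" "0 \<le> nb_pmf s p j"
      using nb_pmf_nonneg[OF r] nb_pmf_nonneg[OF s] by auto
    then show "F zj \<le> G zj" "0 \<le> F zj"
      unfolding zj F_def G_def using g by (simp_all add: mult.assoc mult_left_mono)
  qed
  have "infsum F (Sigma UNIV (\<lambda>_. UNIV)) = (\<Sum>\<^sub>\<infinity>z. \<Sum>\<^sub>\<infinity>j. F (z, j))"
    using infsum_Sigma_banach[OF F_summable] by simp
  also have "\<dots> = nb_expect r p (\<lambda>z. nb_expect s p (g z))"
    unfolding nb_expect_def F_def by (simp add: mult.assoc infsum_cmult_right')
  finally show ?thesis unfolding F_def by simp
qed

end

definition bounded_monotone :: "real \<Rightarrow> (nat \<Rightarrow> nat \<Rightarrow> real) \<Rightarrow> bool" where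
  "bounded_monotone B V \<longleftrightarrow> (\<forall>x k. 0 \<le> V x k \<and> V x k \<le> B)
     \<and> (\<forall>k x x'. x \<le> x' \<longrightarrow> V x k \<le> V x' k) \<and> (\<forall>x k k'. k \<le> k' \<longrightarrow> V x k \<le> V x k')"

text \<open>\<open>expected_next \<alpha>0 N p V k y\<close> is \<open>E[V(y + Z, k + Z + K)]\<close> with \<open>Z\<close>, \<open>K\<close> as in the
  recursion, where \<open>y = x (1 - a)\<close> is the level after action \<open>a\<close> has been applied.\<close>

definition expected_next ::
  "real \<Rightarrow> nat \<Rightarrow> real \<Rightarrow> (nat \<Rightarrow> nat \<Rightarrow> real) \<Rightarrow> nat \<Rightarrow> nat \<Rightarrow> real" where
  "expected_next \<alpha>0 N p V k y = nb_expect (\<alpha>0 + real k) p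
     (\<lambda>z. nb_expect ((real N - 1) * (\<alpha>0 + real k)) p (\<lambda>j. V (y + z) (k + z + j)))"

context
  fixes \<alpha>0 :: real and N :: nat and p :: real and V :: "nat \<Rightarrow> nat \<Rightarrow> real" and B :: real
  assumes \<alpha>0_pos: "\<alpha>0 > 0" and N_pos: "N \<ge> 1" and p_pos: "0 < p" and p_less_1: "p < 1"
    and V: "bounded_monotone B V"
begin

private lemma shapes_nonneg: "0 \<le> \<alpha>0 + real k" "0 \<le> (real N - 1) * (\<alpha>0 + real k)"
  using \<alpha>0_pos N_pos by auto

private lemma V_bounds: "0 \<le> V x k" "V x k \<le> B"
  using V unfolding bounded_monotone_def by auto

private lemma V_mono: "x \<le> x' \<Longrightarrow> V x k \<le> V x' k" "k \<le> k' \<Longrightarrow> V x k \<le> V x k'"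
  using V unfolding bounded_monotone_def by auto

private lemma inner_bounds:
  "0 \<le> nb_expect ((real N - 1) * (\<alpha>0 + real k)) p (\<lambda>j. V (y + z) (k' + z + j))"
  "nb_expect ((real N - 1) * (\<alpha>0 + real k)) p (\<lambda>j. V (y + z) (k' + z + j)) \<le> B"
  using nb_expect_nonneg[OF p_pos p_less_1 shapes_nonneg(2)]
    nb_expect_le_bound[OF p_pos p_less_1 shapes_nonneg(2)] V_bounds by auto

lemma expected_next_bounds: "0 \<le> expected_next \<alpha>0 N p V k y" "expected_next \<alpha>0 N p V k y \<le> B"
  unfolding expected_next_def
  using nb_expect_nonneg[OF p_pos p_less_1 shapes_nonneg(1)]
    nb_expect_le_bound[OF p_pos p_less_1 shapes_nonneg(1)] inner_bounds by auto

lemma expected_next_mono_level: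
  assumes "y \<le> y'"
  shows "expected_next \<alpha>0 N p V k y \<le> expected_next \<alpha>0 N p V k y'"
  unfolding expected_next_def
  by (intro nb_expect_mono[OF p_pos p_less_1 shapes_nonneg(1), where B = B] inner_bounds
      nb_expect_mono[OF p_pos p_less_1 shapes_nonneg(2), where B = B] V_bounds V_mono) (simp add: assms)

lemma expected_next_mono_count:
  assumes kk': "k \<le> k'"
  shows "expected_next \<alpha>0 N p V k y \<le> expected_next \<alpha>0 N p V k' y"
proof -
  let ?r = "\<lambda>k. \<alpha>0 + real k" and ?s = "\<lambda>k. (real N - 1) * (\<alpha>0 + real k)"
  have "?r k \<le> ?r k'" "?s k \<le> ?s k'"
    using kk' N_pos by (auto intro: mult_left_mono)
  have "expected_next \<alpha>0 N p V k y
      \<le> nb_expect (?r k) p (\<lambda>z. nb_expect (?s k) p (\<lambda>j. V (y + z) (k' + z + j)))"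
    unfolding expected_next_def
    by (intro nb_expect_mono[OF p_pos p_less_1 shapes_nonneg(1), where B = B] inner_bounds
        nb_expect_mono[OF p_pos p_less_1 shapes_nonneg(2), where B = B] V_bounds V_mono) (simp add: kk')
  also have "\<dots> \<le> nb_expect (?r k) p (\<lambda>z. nb_expect (?s k') p (\<lambda>j. V (y + z) (k' + z + j)))"
    by (intro nb_expect_mono[OF p_pos p_less_1 shapes_nonneg(1), where B = B] inner_bounds
        nb_expect_mono_shape[OF p_pos p_less_1 shapes_nonneg(2) \<open>?s k \<le> ?s k'\<close>, where B = B] V_bounds V_mono)
      simp
  also have "\<dots> \<le> expected_next \<alpha>0 N p V k' y"
    unfolding expected_next_def
  proof (intro nb_expect_mono_shape[OF p_pos p_less_1 shapes_nonneg(1) \<open>?r k \<le> ?r k'\<close>, where B = B] inner_bounds)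
    fix z z' :: nat
    assume "z \<le> z'"
    then show "nb_expect (?s k') p (\<lambda>j. V (y + z) (k' + z + j))
      \<le> nb_expect (?s k') p (\<lambda>j. V (y + z') (k' + z' + j))"
      by (intro nb_expect_mono[OF p_pos p_less_1 shapes_nonneg(2), where B = B] V_bounds
          order.trans[OF V_mono(1) V_mono(2)]) simp_all
  qed
  finally show ?thesis .
qed

end

lemma p_t_bounds: "\<beta>0 > 0 \<Longrightarrow> 0 < p_t N \<beta>0 t \<and> p_t N \<beta>0 t < 1"
  unfolding p_t_def by (simp add: add_pos_nonneg)

declare Vrem.simps(2) [simp del]

lemma Vrem_Suc_eq:
  fixes N T m \<xi> k :: nat and \<alpha>0 \<beta>0 cp cu :: real
  defines "E \<equiv> expected_next \<alpha>0 N (p_t N \<beta>0 (T - Suc m)) (Vrem N T \<alpha>0 \<beta>0 \<xi> cp cu m) k"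
  assumes "\<alpha>0 > 0" "N \<ge> 1" "\<beta>0 > 0" and V: "bounded_monotone B (Vrem N T \<alpha>0 \<beta>0 \<xi> cp cu m)"
  shows "Vrem N T \<alpha>0 \<beta>0 \<xi> cp cu (Suc m) x k
    = (if x < \<xi> then min (E x) (cp + E 0) else cu + E 0)"
proof -
  have "0 \<le> (real N - 1) * (\<alpha>0 + real k)" using assms by simp
  then have "(\<Sum>\<^sub>\<infinity>(z, j)\<in>UNIV. nb_pmf (\<alpha>0 + real k) (p_t N \<beta>0 (T - Suc m)) z
        * nb_pmf ((real N - 1) * (\<alpha>0 + real k)) (p_t N \<beta>0 (T - Suc m)) j
        * Vrem N T \<alpha>0 \<beta>0 \<xi> cp cu m (y + z) (k + z + j)) = E y" for y
    unfolding E_def expected_next_def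
    using V p_t_bounds[of \<beta>0 N "T - Suc m"] assms
    by (intro infsum_nb_pmf_product_eq_nb_expect_iterated) (auto simp: bounded_monotone_def)
  note E = this this[of 0, simplified]
  show ?thesis
    unfolding Vrem.simps(2) Let_def by (simp add: acts_def cost_def ind_def E)
qed

text \<open>The minimum over the actions is where \<open>cp < cu\<close> enters: beyond the threshold the value
  \<open>cu + E 0\<close> dominates the replacement option \<open>cp + E 0\<close> still available below it.\<close>

lemma bounded_monotone_Vrem_Suc:
  fixes \<alpha>0 \<beta>0 :: real
  assumes "\<alpha>0 > 0" "N \<ge> 1" "\<beta>0 > 0" and cp: "0 < cp" "cp < cu"
    and V: "bounded_monotone B (Vrem N T \<alpha>0 \<beta>0 \<xi> cp cu m)"
  shows "bounded_monotone (B + cu) (Vrem N T \<alpha>0 \<beta>0 \<xi> cp cu (Suc m))"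
proof -
  define E where "E = expected_next \<alpha>0 N (p_t N \<beta>0 (T - Suc m)) (Vrem N T \<alpha>0 \<beta>0 \<xi> cp cu m)"
  have p: "0 < p_t N \<beta>0 (T - Suc m)" "p_t N \<beta>0 (T - Suc m) < 1"
    using p_t_bounds assms(3) by auto
  have E_bounds: "0 \<le> E k y" "E k y \<le> B" for k y
    unfolding E_def by (rule expected_next_bounds[OF assms(1,2) p V])+
  have E_mono_level: "y \<le> y' \<Longrightarrow> E k y \<le> E k y'" for k y y'
    unfolding E_def by (rule expected_next_mono_level[OF assms(1,2) p V])
  have E_mono_count: "k \<le> k' \<Longrightarrow> E k y \<le> E k' y" for k k' y
    unfolding E_def by (rule expected_next_mono_count[OF assms(1,2) p V])
  have below: "Vrem N T \<alpha>0 \<beta>0 \<xi> cp cu (Suc m) x k = min (E k x) (cp + E k 0)" if "x < \<xi>" for x k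
    using Vrem_Suc_eq[OF assms(1-3) V, of x k] that unfolding E_def by simp
  have above: "Vrem N T \<alpha>0 \<beta>0 \<xi> cp cu (Suc m) x k = cu + E k 0" if "\<not> x < \<xi>" for x k
    using Vrem_Suc_eq[OF assms(1-3) V, of x k] that unfolding E_def by simp
  show ?thesis
    unfolding bounded_monotone_def
  proof (intro conjI allI impI)
    fix x k
    show "0 \<le> Vrem N T \<alpha>0 \<beta>0 \<xi> cp cu (Suc m) x k"
      using E_bounds(1)[of k x] E_bounds(1)[of k 0] cp
      by (cases "x < \<xi>") (simp_all add: below above)
    show "Vrem N T \<alpha>0 \<beta>0 \<xi> cp cu (Suc m) x k \<le> B + cu"
      using E_bounds(2)[of k x] E_bounds(2)[of k 0] cp
      by (cases "x < \<xi>") (simp_all add: below above min.coboundedI1)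
  next
    fix k x x' :: nat
    assume "x \<le> x'"
    then show "Vrem N T \<alpha>0 \<beta>0 \<xi> cp cu (Suc m) x k \<le> Vrem N T \<alpha>0 \<beta>0 \<xi> cp cu (Suc m) x' k"
      using E_mono_level[of x x' k] cp
      by (cases "x' < \<xi>"; cases "x < \<xi>") (simp_all add: below above min.coboundedI2)
  next
    fix x k k' :: nat
    assume "k \<le> k'"
    then show "Vrem N T \<alpha>0 \<beta>0 \<xi> cp cu (Suc m) x k \<le> Vrem N T \<alpha>0 \<beta>0 \<xi> cp cu (Suc m) x k'"
      using E_mono_count[of k k' x] E_mono_count[of k k' 0]
      by (cases "x < \<xi>") (simp_all add: below above min_le_iff_disj)
  qed
qed

lemma bounded_monotone_Vrem:
  fixes \<alpha>0 \<beta>0 :: real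
  assumes "\<alpha>0 > 0" "N \<ge> 1" "\<beta>0 > 0" "0 < cp" "cp < cu"
  shows "bounded_monotone (real (Suc m) * cu) (Vrem N T \<alpha>0 \<beta>0 \<xi> cp cu m)"
proof (induction m)
  case 0
  show ?case using assms(4,5) by (auto simp: bounded_monotone_def ind_def)
next
  case (Suc m)
  have "real (Suc (Suc m)) * cu = real (Suc m) * cu + cu"
    by (simp add: algebra_simps)
  then show ?case
    using bounded_monotone_Vrem_Suc[OF assms Suc.IH] by simp
qed

theorem proposition1:
  fixes N T :: nat and \<alpha>0 \<beta>0 :: real and \<xi> :: "nat \<Rightarrow> nat" and cp cu :: "nat \<Rightarrow> real"
  assumes "N \<ge> 1" and "T \<ge> 1" and "\<alpha>0 > 0" and "\<beta>0 > 0"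
    and "\<forall>i\<in>{1..N}. \<xi> i \<ge> 1 \<and> 0 < cp i \<and> cp i < cu i"
    and "i \<in> {1..N}" and "t \<le> T"
  shows "(\<forall>k x x'. x \<le> x' \<longrightarrow>
            Vtil N T \<alpha>0 \<beta>0 (\<xi> i) (cp i) (cu i) t x k \<le> Vtil N T \<alpha>0 \<beta>0 (\<xi> i) (cp i) (cu i) t x' k)
       \<and> (\<forall>x k k'. k \<le> k' \<longrightarrow>
            Vtil N T \<alpha>0 \<beta>0 (\<xi> i) (cp i) (cu i) t x k \<le> Vtil N T \<alpha>0 \<beta>0 (\<xi> i) (cp i) (cu i) t x k')"
proof -
  have "0 < cp i" "cp i < cu i" using assms(5,6) by auto
  then have "bounded_monotone (real (Suc (T - t)) * cu i)
      (Vrem N T \<alpha>0 \<beta>0 (\<xi> i) (cp i) (cu i) (T - t))"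
    using bounded_monotone_Vrem assms(1,3,4) by blast
  then show ?thesis unfolding Vtil_def bounded_monotone_def by blast
qed

end
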